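(* Assume $p_j=1$ for all $j\in[n]$. Let $\mathcal B_{IPR}=\{B_1,\dots,B_m\}$ be the partition of the $n$ jobs returned by IPR with $\rho=2$. Then $b_{\max}\le\frac{W}{\ell}+1$, where, for the final tentative assignment, $b_{\max}=\max_{B\in\mathcal B_{IPR},|B|\ge2}p(B)$, $\mathcal M_{\max}$ is the collection containing a bag of processing time $b_{\max}$, $W=\sum_{B\in\mathcal M_{\max}}p(B)$ and $\ell=|\mathcal M_{\max}|$.
   Context: Jobs $j\in[n]$ have processing times $p_j\ge0$; for a bag $B$, $p(B)=\sum_{j\in B}p_j$. There are $m$ machines with predicted speeds $\hat s_1\ge\dots\ge\hat s_m$; $opt(\mathbf p,\hat{\mathbf s})$ is the minimum makespan $\max_i(\text{load of } i)/\hat s_i$ of assigning jobs to machines with speeds $\hat{\mathbf s}$. Algorithm IPR. Input: $\hat{\mathbf s}$, $\mathbf p$, $\alpha\in(0,1)$, accuracy $\epsilon\in(0,1)$, $\rho\ge1$. (1) Compute a partition $B_1,\dots,B_m$ with $p(B_1)\ge\dots\ge p(B_m)$ such that putting $B_i$ on machine $i$ has makespan at most $(1+\epsilon)opt(\mathbf p,\hat{\mathbf s})$ under speeds $\hat{\mathbf s}$. (2) Set $\overline{OPT}_C=\max_i p(B_i)/\hat s_i$ and tentative assignment $\mathcal M_i=\{B_i\}$. (3) While $\max\{p(B): B\in\cup_i\mathcal M_i, |B|\ge2\}>\rho\min\{p(B):B\in\cup_i\mathcal M_i\}$: compute $\mathcal M'=$ LPT-Rebalance$(\mathcal M)$; if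 $\max_i\sum_{B\in\mathcal M'_i}p(B)/\hat s_i>(1+\alpha)\overline{OPT}_C$ return the current bags $\cup_i\mathcal M_i$; else $\mathcal M\leftarrow\mathcal M'$. (4) Return the bags $\cup_i\mathcal M_i$. LPT-Rebalance: let $B_{\min}$ be a bag of minimum $p(B)$ over all bags, $\mathcal M_{\min}$ its collection, $\mathcal M_{\max}$ a collection containing a bag of maximum $p(B)$ among bags with at least two jobs. Move $B_{\min}$ into $\mathcal M_{\max}$, let $\ell=|\mathcal M_{\max}|$, pool its jobs and redistribute them into $\ell$ new bags by LPT (jobs in non-increasing processing time, each into a currently least-loaded bag); these form the new $\mathcal M_{\max}$. *)

theory Defs
  imports Complex_Main "HOL-Library.FuncSet"
begin

text \<open>Jobs are 1..n, machines are 1..m. A bag is a set of jobs; a tentative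
assignment M maps each machine i to the list of bags of its collection.\<close>

definition bag_p :: "(nat \<Rightarrow> real) \<Rightarrow> nat set \<Rightarrow> real" where
  "bag_p p B = (\<Sum>j\<in>B. p j)"

definition opt :: "(nat \<Rightarrow> real) \<Rightarrow> (nat \<Rightarrow> real) \<Rightarrow> nat \<Rightarrow> nat \<Rightarrow> real" where
  "opt p s n m = Min ((\<lambda>f. Max ((\<lambda>i. (\<Sum>j\<in>{j\<in>{1..n}. f j = i}. p j) / s i) ` {1..m}))
                       ` ({1..n} \<rightarrow>\<^sub>E {1..m}))"

definition initial_partition ::
  "(nat \<Rightarrow> real) \<Rightarrow> (nat \<Rightarrow> real) \<Rightarrow> nat \<Rightarrow> nat \<Rightarrow> real \<Rightarrow> (nat \<Rightarrow> nat set) \<Rightarrow> bool" where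
  "initial_partition p s n m \<epsilon> B \<longleftrightarrow>
     (\<forall>i\<in>{1..m}. B i \<subseteq> {1..n}) \<and> (\<Union>i\<in>{1..m}. B i) = {1..n} \<and>
     (\<forall>i\<in>{1..m}. \<forall>i'\<in>{1..m}. i \<noteq> i' \<longrightarrow> B i \<inter> B i' = {}) \<and>
     (\<forall>i\<in>{1..m}. \<forall>i'\<in>{1..m}. i \<le> i' \<longrightarrow> bag_p p (B i') \<le> bag_p p (B i)) \<and>
     Max ((\<lambda>i. bag_p p (B i) / s i) ` {1..m}) \<le> (1 + \<epsilon>) * opt p s n m"

definition bag_idx :: "nat \<Rightarrow> (nat \<Rightarrow> nat set list) \<Rightarrow> (nat \<times> nat) set" where
  "bag_idx m M = {(i, k). i \<in> {1..m} \<and> k < length (M i)}"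

definition loop_cond :: "(nat \<Rightarrow> real) \<Rightarrow> nat \<Rightarrow> real \<Rightarrow> (nat \<Rightarrow> nat set list) \<Rightarrow> bool" where
  "loop_cond p m \<rho> M \<longleftrightarrow>
     (\<exists>(i, k)\<in>bag_idx m M. 2 \<le> card (M i ! k)) \<and>
     Max {bag_p p (M i ! k) | i k. (i, k) \<in> bag_idx m M \<and> 2 \<le> card (M i ! k)}
       > \<rho> * Min {bag_p p (M i ! k) | i k. (i, k) \<in> bag_idx m M}"

inductive lpt :: "(nat \<Rightarrow> real) \<Rightarrow> nat list \<Rightarrow> nat set list \<Rightarrow> nat set list \<Rightarrow> bool"
  for p where
  lpt_nil: "lpt p [] bs bs"
| lpt_cons: "k < length bs \<Longrightarrow> (\<forall>k'<length bs. bag_p p (bs ! k) \<le> bag_p p (bs ! k'))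
     \<Longrightarrow> lpt p js (bs[k := insert j (bs ! k)]) bs' \<Longrightarrow> lpt p (j # js) bs bs'"

definition lpt_bags :: "(nat \<Rightarrow> real) \<Rightarrow> nat set \<Rightarrow> nat \<Rightarrow> nat set list \<Rightarrow> bool" where
  "lpt_bags p J l bs \<longleftrightarrow> (\<exists>js. distinct js \<and> set js = J \<and>
      sorted_wrt (\<lambda>a b. p b \<le> p a) js \<and> lpt p js (replicate l {}) bs)"

definition lpt_rebalance ::
  "(nat \<Rightarrow> real) \<Rightarrow> nat \<Rightarrow> (nat \<Rightarrow> nat set list) \<Rightarrow> (nat \<Rightarrow> nat set list) \<Rightarrow> bool" where
  "lpt_rebalance p m M M' \<longleftrightarrow>
    (\<exists>i k i' k'. (i, k) \<in> bag_idx m M \<and> (i', k') \<in> bag_idx m M \<and>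
      (\<forall>(a, b)\<in>bag_idx m M. bag_p p (M i ! k) \<le> bag_p p (M a ! b)) \<and>
      2 \<le> card (M i' ! k') \<and>
      (\<forall>(a, b)\<in>bag_idx m M. 2 \<le> card (M a ! b) \<longrightarrow> bag_p p (M a ! b) \<le> bag_p p (M i' ! k')) \<and>
      (let M1 = M(i := take k (M i) @ drop (Suc k) (M i));
           C = M1 i' @ [M i ! k]
       in \<exists>bs. lpt_bags p (\<Union>(set C)) (length C) bs \<and> M' = M1(i' := bs)))"

definition makespan :: "(nat \<Rightarrow> real) \<Rightarrow> (nat \<Rightarrow> real) \<Rightarrow> nat \<Rightarrow> (nat \<Rightarrow> nat set list) \<Rightarrow> real" where
  "makespan p s m M = Max ((\<lambda>i. sum_list (map (bag_p p) (M i)) / s i) ` {1..m})"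

text \<open>ipr_loop ... OPTC M Mf: starting the while loop in state M, the algorithm
can return the tentative assignment Mf.\<close>
inductive ipr_loop :: "(nat \<Rightarrow> real) \<Rightarrow> (nat \<Rightarrow> real) \<Rightarrow> nat \<Rightarrow> real \<Rightarrow> real \<Rightarrow> real
    \<Rightarrow> (nat \<Rightarrow> nat set list) \<Rightarrow> (nat \<Rightarrow> nat set list) \<Rightarrow> bool"
  for p s m \<alpha> \<rho> OPTC where
  stop: "\<not> loop_cond p m \<rho> M \<Longrightarrow> ipr_loop p s m \<alpha> \<rho> OPTC M M"
| abort: "loop_cond p m \<rho> M \<Longrightarrow> lpt_rebalance p m M M' \<Longrightarrow>
     makespan p s m M' > (1 + \<alpha>) * OPTC \<Longrightarrow> ipr_loop p s m \<alpha> \<rho> OPTC M M"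
| step: "loop_cond p m \<rho> M \<Longrightarrow> lpt_rebalance p m M M' \<Longrightarrow>
     makespan p s m M' \<le> (1 + \<alpha>) * OPTC \<Longrightarrow> ipr_loop p s m \<alpha> \<rho> OPTC M' Mf \<Longrightarrow>
     ipr_loop p s m \<alpha> \<rho> OPTC M Mf"

definition ipr_run :: "(nat \<Rightarrow> real) \<Rightarrow> (nat \<Rightarrow> real) \<Rightarrow> nat \<Rightarrow> nat \<Rightarrow> real \<Rightarrow> real \<Rightarrow> real
    \<Rightarrow> (nat \<Rightarrow> nat set list) \<Rightarrow> bool" where
  "ipr_run p s n m \<alpha> \<epsilon> \<rho> Mf \<longleftrightarrow> (\<exists>B. initial_partition p s n m \<epsilon> B \<and>
     ipr_loop p s m \<alpha> \<rho> (Max ((\<lambda>i. bag_p p (B i) / s i) ` {1..m})) (\<lambda>i. [B i]) Mf)"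

end

theory Submission
  imports Defs
begin

text \<open>With unit jobs, LPT started from empty bags always adds a job of weight one to a
lightest bag, so the loads of the bags it produces differ pairwise by at most one. A
rebalancing step replaces one collection by such an LPT output and only deletes a bag from
another, so every collection of every tentative assignment stays balanced in this sense.
A bag of a balanced collection exceeds the average load of the collection by at most one;
this holds for every bag.\<close>

definition balanced :: "(nat \<Rightarrow> real) \<Rightarrow> nat set list \<Rightarrow> bool" where
  "balanced p bs \<longleftrightarrow> (\<forall>B\<in>set bs. \<forall>B'\<in>set bs. bag_p p B \<le> bag_p p B' + 1)"

definition unit_balanced :: "(nat \<Rightarrow> real) \<Rightarrow> nat \<Rightarrow> (nat \<Rightarrow> nat set list) \<Rightarrow> bool" where
  "unit_balanced p m M \<longleftrightarrow>
     (\<forall>a\<in>{1..m}. balanced p (M a) \<and> (\<forall>B\<in>set (M a). \<forall>j\<in>B. p j = 1))"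

lemma balanced_subset: "balanced p xs \<Longrightarrow> set ys \<subseteq> set xs \<Longrightarrow> balanced p ys"
  unfolding balanced_def by blast

lemma balanced_replicate_empty: "balanced p (replicate l {})"
  unfolding balanced_def bag_p_def by simp

text \<open>No finiteness assumption is needed: for infinite \<open>B\<close> both sides are the junk value 0.\<close>
lemma bag_p_insert_unit_bounds:
  assumes "p j = 1"
  shows "bag_p p B \<le> bag_p p (insert j B)" and "bag_p p (insert j B) \<le> bag_p p B + 1"
proof -
  have "bag_p p (insert j B) = bag_p p B \<or> bag_p p (insert j B) = bag_p p B + 1"
  proof (cases "finite B \<and> j \<notin> B")
    case True
    then show ?thesis using assms by (simp add: bag_p_def)
  next
    case False
    then show ?thesis by (auto simp: bag_p_def insert_absorb)
  qed
  then show "bag_p p B \<le> bag_p p (insert j B)" and "bag_p p (insert j B) \<le> bag_p p B + 1"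
    by auto
qed

lemma lpt_balanced:
  assumes "lpt p js bs bs'" "\<forall>j\<in>set js. p j = 1" "balanced p bs"
  shows "balanced p bs'"
  using assms
proof (induction rule: lpt.induct)
  case (lpt_nil bs)
  then show ?case by simp
next
  case (lpt_cons k bs js j bs')
  let ?x = "insert j (bs ! k)"
  have lightest: "bag_p p (bs ! k) \<le> bag_p p B" if "B \<in> set bs" for B
    using that lpt_cons.hyps(2) by (auto simp: in_set_conv_nth)
  have heaviest: "bag_p p B \<le> bag_p p (bs ! k) + 1" if "B \<in> set bs" for B
    using that lpt_cons.hyps(1) lpt_cons.prems(2) unfolding balanced_def by simp
  note x_bounds = bag_p_insert_unit_bounds[of p j "bs ! k"]
  have x_le: "bag_p p ?x \<le> bag_p p B + 1" if "B \<in> set bs" for B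
    using lightest[OF that] x_bounds lpt_cons.prems(1) by fastforce
  have le_x: "bag_p p B \<le> bag_p p ?x + 1" if "B \<in> set bs" for B
    using heaviest[OF that] x_bounds lpt_cons.prems(1) by fastforce
  have "balanced p (bs[k := ?x])"
    unfolding balanced_def
  proof (intro ballI)
    fix B B' assume "B \<in> set (bs[k := ?x])" "B' \<in> set (bs[k := ?x])"
    then have "B = ?x \<or> B \<in> set bs" "B' = ?x \<or> B' \<in> set bs"
      using set_update_subset_insert[of bs k ?x] by blast+
    then show "bag_p p B \<le> bag_p p B' + 1"
      using lpt_cons.prems(2) x_le le_x unfolding balanced_def by (elim disjE) auto
  qed
  then show ?case using lpt_cons.IH lpt_cons.prems by simp
qed

lemma lpt_Union_subset:
  assumes "lpt p js bs bs'"
  shows "\<Union>(set bs') \<subseteq> set js \<union> \<Union>(set bs)"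
  using assms
proof (induction rule: lpt.induct)
  case (lpt_cons k bs js j bs')
  have "\<Union>(set (bs[k := insert j (bs ! k)])) \<subseteq> insert j (\<Union>(set bs))"
    using set_update_subset_insert[of bs k "insert j (bs ! k)"] lpt_cons.hyps(1) by auto
  then show ?case using lpt_cons.IH unfolding list.set by blast
qed simp

lemma lpt_bags_unit_balanced:
  assumes "lpt_bags p J l bs" "\<forall>j\<in>J. p j = 1"
  shows "balanced p bs" and "\<forall>B\<in>set bs. \<forall>j\<in>B. p j = 1"
proof -
  obtain js where js: "set js = J" "lpt p js (replicate l {}) bs"
    using assms(1) unfolding lpt_bags_def by blast
  show "balanced p bs"
    using lpt_balanced[OF js(2)] js(1) assms(2) balanced_replicate_empty by blast
  show "\<forall>B\<in>set bs. \<forall>j\<in>B. p j = 1"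
    using lpt_Union_subset[OF js(2)] js(1) assms(2) by auto
qed

lemma lpt_rebalance_unit_balanced:
  assumes "lpt_rebalance p m M M'" "unit_balanced p m M"
  shows "unit_balanced p m M'"
proof -
  obtain i k i' k' where ik: "(i, k) \<in> bag_idx m M" "(i', k') \<in> bag_idx m M"
    and rebalanced: "let M1 = M(i := take k (M i) @ drop (Suc k) (M i));
           C = M1 i' @ [M i ! k]
       in \<exists>bs. lpt_bags p (\<Union>(set C)) (length C) bs \<and> M' = M1(i' := bs)"
    using assms(1) unfolding lpt_rebalance_def by blast
  then have i: "i \<in> {1..m}" "k < length (M i)" "i' \<in> {1..m}" unfolding bag_idx_def by auto
  define M1 where "M1 = M(i := take k (M i) @ drop (Suc k) (M i))"
  define C where "C = M1 i' @ [M i ! k]"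
  obtain bs where bs: "lpt_bags p (\<Union>(set C)) (length C) bs" "M' = M1(i' := bs)"
    using rebalanced unfolding M1_def C_def Let_def by blast
  have M1_sub: "set (M1 a) \<subseteq> set (M a)" for a
    unfolding M1_def using set_take_subset[of k "M i"] set_drop_subset[of "Suc k" "M i"] by auto
  have M1: "unit_balanced p m M1"
    unfolding unit_balanced_def
  proof
    fix a assume "a \<in> {1..m}"
    then have "balanced p (M a)" "\<forall>B\<in>set (M a). \<forall>j\<in>B. p j = 1"
      using assms(2) unfolding unit_balanced_def by auto
    then show "balanced p (M1 a) \<and> (\<forall>B\<in>set (M1 a). \<forall>j\<in>B. p j = 1)"
      using balanced_subset[OF _ M1_sub] M1_sub by blast
  qed
  have "set C \<subseteq> set (M i') \<union> set (M i)"
    unfolding C_def using M1_sub[of i'] i(2) by auto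
  moreover have "\<forall>B\<in>set (M i') \<union> set (M i). \<forall>j\<in>B. p j = 1"
    using assms(2) i(1,3) unfolding unit_balanced_def by auto
  ultimately have "\<forall>j\<in>\<Union>(set C). p j = 1"
    by blast
  then have "balanced p bs" "\<forall>B\<in>set bs. \<forall>j\<in>B. p j = 1"
    using lpt_bags_unit_balanced[OF bs(1)] by blast+
  then show ?thesis
    using M1 unfolding bs(2) unit_balanced_def by simp
qed

lemma ipr_loop_unit_balanced:
  assumes "ipr_loop p s m \<alpha> \<rho> OPTC M Mf" "unit_balanced p m M"
  shows "unit_balanced p m Mf"
  using assms
  by (induction rule: ipr_loop.induct) (auto intro: lpt_rebalance_unit_balanced)

lemma ipr_run_unit_balanced:
  assumes "ipr_run p s n m \<alpha> \<epsilon> \<rho> Mf" "\<forall>j\<in>{1..n}. p j = 1"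
  shows "unit_balanced p m Mf"
proof -
  obtain B where B: "initial_partition p s n m \<epsilon> B"
    "ipr_loop p s m \<alpha> \<rho> (Max ((\<lambda>i. bag_p p (B i) / s i) ` {1..m})) (\<lambda>i. [B i]) Mf"
    using assms(1) unfolding ipr_run_def by blast
  have "unit_balanced p m (\<lambda>i. [B i])"
    using B(1) assms(2) unfolding initial_partition_def unit_balanced_def balanced_def by auto
  then show ?thesis using ipr_loop_unit_balanced[OF B(2)] by blast
qed

lemma le_average_add_if_pairwise_le_add:
  fixes f :: "'a \<Rightarrow> real"
  assumes "\<forall>y\<in>set xs. f x \<le> f y + c" "x \<in> set xs"
  shows "f x \<le> sum_list (map f xs) / real (length xs) + c"
proof -
  have "sum_list (map (\<lambda>_. f x - c) xs) \<le> sum_list (map f xs)"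
    by (rule sum_list_mono) (use assms(1) in auto)
  then have "real (length xs) * (f x - c) \<le> sum_list (map f xs)"
    by (simp add: sum_list_triv)
  moreover have "real (length xs) > 0" using assms(2) by (auto simp: length_pos_if_in_set)
  ultimately have "f x - c \<le> sum_list (map f xs) / real (length xs)"
    by (simp add: pos_le_divide_eq mult.commute)
  then show ?thesis by linarith
qed

theorem lemma11:
  fixes p s :: "nat \<Rightarrow> real" and n m i k :: nat and \<alpha> \<epsilon> :: real
    and Mf :: "nat \<Rightarrow> nat set list"
  assumes "1 \<le> m"
    and "\<forall>i\<in>{1..m}. 0 < s i"
    and "\<forall>i\<in>{1..m}. \<forall>i'\<in>{1..m}. i \<le> i' \<longrightarrow> s i' \<le> s i"
    and "0 < \<alpha>" and "\<alpha> < 1" and "0 < \<epsilon>" and "\<epsilon> < 1"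
    and "\<forall>j\<in>{1..n}. p j = 1"
    and "ipr_run p s n m \<alpha> \<epsilon> 2 Mf"
    and "i \<in> {1..m}" and "k < length (Mf i)" and "2 \<le> card (Mf i ! k)"
    and "bag_p p (Mf i ! k) =
           Max {bag_p p (Mf a ! b) | a b. a \<in> {1..m} \<and> b < length (Mf a) \<and> 2 \<le> card (Mf a ! b)}"
  shows "bag_p p (Mf i ! k) \<le> sum_list (map (bag_p p) (Mf i)) / real (length (Mf i)) + 1"
proof -
  have "balanced p (Mf i)"
    using ipr_run_unit_balanced[OF assms(9,8)] assms(10) unfolding unit_balanced_def by blast
  moreover have "Mf i ! k \<in> set (Mf i)" using assms(11) by simp
  ultimately show ?thesis
    by (intro le_average_add_if_pairwise_le_add) (auto simp: balanced_def)
qed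

end
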